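(* Let $q$ be a prime power and let $X$ be any polarity graph of the generalized quadrangle $W(q)$ (loops at absolute points retained). Then every independent set $S$ of $X$ satisfies \[ |S|\le \frac{\sqrt{2q}+\sqrt{2q+4(q^2+1)\frac{q+\sqrt{2q}+1}{q^3+q^2+q+1}}}{2\,\frac{q+\sqrt{2q}+1}{q^3+q^2+q+1}}. \]
   Context: $W(q)$ is the symplectic generalized quadrangle: its points are the $q^3+q^2+q+1$ points of $PG(3,q)$ and its lines are the $q^3+q^2+q+1$ lines of $PG(3,q)$ that are totally isotropic for a fixed nondegenerate alternating form, with incidence being containment; each point lies on $q+1$ lines, each line has $q+1$ points. A polarity is an incidence-preserving bijection $\sigma$ mapping points to lines and lines to points with $\sigma^2$ the identity. The polarity graph has the points as vertices, with $x$ adjacent to $y$ iff $x$ is incident with $\sigma(y)$; points incident with their own image are absolute and carry loops. An independent set is a set of vertices no two distinct members of which are adjacent (absolute points may belong to it). *)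

theory Defs
  imports "HOL-Analysis.Finite_Cartesian_Product"
begin

text \<open>Vectors of F^4, F a finite field; points/lines of PG(3,F) as 1-/2-dimensional
 subspaces (sets of vectors); standard nondegenerate alternating form.\<close>

definition symp :: "'a::field ^ 4 \<Rightarrow> 'a ^ 4 \<Rightarrow> 'a" where
  "symp x y = x$1 * y$2 - x$2 * y$1 + x$3 * y$4 - x$4 * y$3"

definition lincomb2 :: "'a::field \<Rightarrow> 'a ^ 4 \<Rightarrow> 'a \<Rightarrow> 'a ^ 4 \<Rightarrow> 'a ^ 4" where
  "lincomb2 a u b v = (\<chi> i. a * u$i + b * v$i)"

definition span1 :: "'a::field ^ 4 \<Rightarrow> ('a ^ 4) set" where
  "span1 v = {(\<chi> i. c * v$i) | c. True}"

definition span2 :: "'a::field ^ 4 \<Rightarrow> 'a ^ 4 \<Rightarrow> ('a ^ 4) set" where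
  "span2 u v = {lincomb2 a u b v | a b. True}"

definition lin_indep2 :: "'a::field ^ 4 \<Rightarrow> 'a ^ 4 \<Rightarrow> bool" where
  "lin_indep2 u v \<longleftrightarrow> (\<forall>a b. lincomb2 a u b v = 0 \<longrightarrow> a = 0 \<and> b = 0)"

definition W_points :: "('a::field ^ 4) set set" where
  "W_points = {span1 v | v. v \<noteq> 0}"

definition W_lines :: "('a::field ^ 4) set set" where
  "W_lines = {span2 u v | u v. lin_indep2 u v \<and> symp u v = 0}"

text \<open>incidence: point p on line l iff p \<subseteq> l\<close>

definition is_polarity :: "(('a::field ^ 4) set \<Rightarrow> ('a ^ 4) set) \<Rightarrow> bool" where
  "is_polarity \<sigma> \<longleftrightarrow>
     bij_betw \<sigma> W_points W_lines \<and> bij_betw \<sigma> W_lines W_points \<and>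
     (\<forall>x \<in> W_points \<union> W_lines. \<sigma> (\<sigma> x) = x) \<and>
     (\<forall>p \<in> W_points. \<forall>l \<in> W_lines. p \<subseteq> l \<longleftrightarrow> \<sigma> l \<subseteq> \<sigma> p)"

definition polarity_adj :: "(('a::field ^ 4) set \<Rightarrow> ('a ^ 4) set) \<Rightarrow> ('a ^ 4) set \<Rightarrow> ('a ^ 4) set \<Rightarrow> bool" where
  "polarity_adj \<sigma> x y \<longleftrightarrow> x \<subseteq> \<sigma> y"

definition polarity_independent :: "(('a::field ^ 4) set \<Rightarrow> ('a ^ 4) set) \<Rightarrow> ('a ^ 4) set set \<Rightarrow> bool" where
  "polarity_independent \<sigma> S \<longleftrightarrow> S \<subseteq> W_points \<and>
     (\<forall>x \<in> S. \<forall>y \<in> S. x \<noteq> y \<longrightarrow> \<not> polarity_adj \<sigma> x y)"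

end

(*
  Let A be the adjacency matrix of the polarity graph, loops included.  It is symmetric with
  row sums q + 1, and (A^2)(x,z) counts the lines through x and z, so A^2 = qI + B where B is
  the collinearity matrix of W(q) (with ones on the diagonal).  As B^2 = q^2 I + (q + 1) J, the
  matrix M = A^2 satisfies M^2 = 2q M + (q + 1) J; hence on vectors orthogonal to the all-ones
  vector A has no eigenvalue below -sqrt(2q).  Evaluating the quadratic form of A on the centred
  indicator vector of an independent set S of size s gives
    a - (q + 1) s^2 / n >= -sqrt(2q) (s - s^2 / n),     n = q^3 + q^2 + q + 1,
  where a is the number of absolute points in S.  Two absolute points are never collinear, so
  their pencils of q + 1 lines are disjoint and a <= q^2 + 1.  Solving the resulting quadratic
  inequality for s gives the bound.
*)

theory Submission
  imports Defs "HOL-Analysis.Cartesian_Space"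
begin

section \<open>Counting in the symplectic space \<open>F\<^sup>4\<close>\<close>

lemma symp_add_left: "symp (u + v) w = symp u w + symp v w"
  and symp_add_right: "symp w (u + v) = symp w u + symp w v"
  and symp_diff_left: "symp (u - v) w = symp u w - symp v w"
  and symp_diff_right: "symp w (u - v) = symp w u - symp w v"
  and symp_smult_left [simp]: "symp (c *s u) w = c * symp u w"
  and symp_smult_right [simp]: "symp w (c *s u) = c * symp w u"
  and symp_self [simp]: "symp u u = 0"
  and symp_zero_right [simp]: "symp u 0 = 0"
  and symp_swap: "symp v u = - symp u v"
  by (simp_all add: symp_def algebra_simps)

lemma symp_nondegenerate:
  fixes z :: "'a::field ^ 4"
  assumes "\<And>w. symp z w = 0"
  shows "z = 0"
proof -
  define e :: "4 \<Rightarrow> 'a ^ 4" where "e k = (\<chi> i. if i = k then 1 else 0)" for k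
  have "symp z (e 2) = z$1" "symp z (e 1) = - z$2" "symp z (e 4) = z$3" "symp z (e 3) = - z$4"
    by (simp_all add: symp_def e_def)
  then show ?thesis
    using assms by (simp add: vec_eq_iff forall_4)
qed

lemma exists_symp_eq_1:
  fixes u :: "'a::field ^ 4"
  assumes "u \<noteq> 0"
  shows "\<exists>w. symp u w = 1"
proof -
  obtain w where "symp u w \<noteq> 0"
    using symp_nondegenerate assms by blast
  then have "symp u ((1 / symp u w) *s w) = 1"
    by simp
  then show ?thesis ..
qed

lemma subspace_symp_perp: "vec.subspace {w. symp u w = 0}"
  by (auto intro!: vec.subspaceI simp: symp_add_right)

lemma span1_eq_span: "span1 v = vec.span {v}"
  by (auto simp: span1_def vec.span_singleton vector_scalar_mult_def)

lemma span2_eq_span: "span2 u v = vec.span {u, v}"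
  by (auto simp: span2_def lincomb2_def vec.span_insert vec.span_singleton vector_scalar_mult_def
      vec_eq_iff algebra_simps)

lemma two_le_card_field: "CARD('a::{field,finite}) \<ge> 2"
proof -
  have "card {0::'a, 1} \<le> CARD('a)"
    by (rule card_mono) auto
  then show ?thesis
    by simp
qed

lemma span1_eq_range: "span1 v = range (\<lambda>c. c *s v)"
  by (simp add: span1_eq_span vec.span_singleton)

lemma zero_in_span1 [simp]: "0 \<in> span1 v"
  and self_in_span1 [simp]: "v \<in> span1 v"
  by (simp_all add: span1_eq_span vec.span_zero vec.span_base)

lemma card_span1:
  fixes v :: "'a::{field,finite} ^ 4"
  assumes "v \<noteq> 0"
  shows "card (span1 v) = CARD('a)"
  unfolding span1_eq_range using assms by (simp add: card_image inj_on_def)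

lemma span1_eq_if_mem:
  assumes "w \<in> span1 v" "w \<noteq> 0"
  shows "span1 w = span1 v"
proof -
  obtain c where w: "w = c *s v" and "c \<noteq> 0"
    using assms by (auto simp: span1_eq_range)
  then have w_in: "d *s w = (d * c) *s v" and v_in: "d *s v = (d / c) *s w" for d
    by (simp_all add: vector_smult_assoc)
  show ?thesis
    unfolding span1_eq_range
  proof (intro subset_antisym image_subsetI)
    show "d *s w \<in> range (\<lambda>d. d *s v)" for d
      using w_in by (rule range_eqI)
    show "d *s v \<in> range (\<lambda>d. d *s w)" for d
      using v_in by (rule range_eqI)
  qed
qed

lemma power_minus_1_eq_sum:
  fixes q :: nat
  assumes "q \<ge> 1"
  shows "q ^ d - 1 = (q - 1) * (\<Sum>i<d. q ^ i)"
proof -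
  have "int (q ^ d - 1) = int q ^ d - 1"
    using assms by (simp add: of_nat_diff)
  also have "\<dots> = (int q - 1) * (\<Sum>i<d. int q ^ i)"
    by (rule power_diff_1_eq)
  also have "\<dots> = int ((q - 1) * (\<Sum>i<d. q ^ i))"
    using assms by (simp add: of_nat_diff)
  finally show ?thesis
    by (simp only: of_nat_eq_iff)
qed

text \<open>The projective points of a cone \<open>V\<close> of size \<open>q^d\<close> partition \<open>V - {0}\<close> into
  blocks of size \<open>q - 1\<close>.\<close>

lemma card_points_in_cone:
  fixes V :: "('a::{field,finite} ^ 4) set"
  assumes "0 \<in> V" and smult: "\<And>c v. v \<in> V \<Longrightarrow> c *s v \<in> V" and "card V = CARD('a) ^ d"
  shows "card {span1 v | v. v \<in> V \<and> v \<noteq> 0} = (\<Sum>i<d. CARD('a) ^ i)"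
proof -
  let ?q = "CARD('a)"
  define Pts where "Pts = {span1 v | v. v \<in> V \<and> v \<noteq> 0}"
  have partition: "V - {0} = (\<Union>p\<in>Pts. p - {0})"
  proof
    show "V - {0} \<subseteq> (\<Union>p\<in>Pts. p - {0})"
      using self_in_span1 unfolding Pts_def by blast
    show "(\<Union>p\<in>Pts. p - {0}) \<subseteq> V - {0}"
      using smult by (auto simp: Pts_def span1_eq_range)
  qed
  have disjoint: "(p - {0}) \<inter> (p' - {0}) = {}" if "p \<in> Pts" "p' \<in> Pts" "p \<noteq> p'" for p p'
    using that span1_eq_if_mem unfolding Pts_def by blast
  have "card (V - {0}) = (\<Sum>p\<in>Pts. card (p - {0}))"
    unfolding partition by (rule card_UN_disjoint) (use disjoint in auto)
  also have "\<dots> = (\<Sum>p\<in>Pts. ?q - 1)"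
    by (rule sum.cong) (auto simp: Pts_def card_span1)
  also have "\<dots> = card Pts * (?q - 1)"
    by simp
  finally have "(?q - 1) * card Pts = (?q - 1) * (\<Sum>i<d. ?q ^ i)"
    using assms power_minus_1_eq_sum[of ?q d] by (simp add: mult.commute)
  then show ?thesis
    using two_le_card_field[where 'a='a] by (simp add: Pts_def)
qed

text \<open>A vector \<open>w\<^sub>0\<close> with \<open>symp z w\<^sub>0 = 1\<close> splits \<open>V\<close> as
  \<open>{w \<in> V. symp z w = 0} \<times> 'a\<close> via \<open>(w, c) \<mapsto> w + c w\<^sub>0\<close>.\<close>

lemma card_symp_hyperplane_section:
  fixes V :: "('a::{field,finite} ^ 4) set"
  assumes V: "vec.subspace V" and w\<^sub>0: "w\<^sub>0 \<in> V" "symp z w\<^sub>0 = 1"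
  shows "card V = card {w \<in> V. symp z w = 0} * CARD('a)"
proof -
  let ?K = "{w \<in> V. symp z w = 0}"
  have "bij_betw (\<lambda>(w, c). w + c *s w\<^sub>0) (?K \<times> UNIV) V"
  proof (rule bij_betw_byWitness[where f' = "\<lambda>v. (v - symp z v *s w\<^sub>0, symp z v)"])
    show "\<forall>a\<in>?K \<times> UNIV. (\<lambda>v. (v - symp z v *s w\<^sub>0, symp z v)) ((\<lambda>(w, c). w + c *s w\<^sub>0) a) = a"
      using w\<^sub>0 by (auto simp: symp_add_right)
    show "\<forall>v\<in>V. (\<lambda>(w, c). w + c *s w\<^sub>0) ((\<lambda>v. (v - symp z v *s w\<^sub>0, symp z v)) v) = v"
      by simp
    show "(\<lambda>(w, c). w + c *s w\<^sub>0) ` (?K \<times> UNIV) \<subseteq> V"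
      using V w\<^sub>0 by (auto intro: vec.subspace_add vec.subspace_scale)
    show "(\<lambda>v. (v - symp z v *s w\<^sub>0, symp z v)) ` V \<subseteq> ?K \<times> UNIV"
      using V w\<^sub>0 by (auto intro: vec.subspace_diff vec.subspace_scale simp: symp_diff_right)
  qed
  then have "card (?K \<times> (UNIV :: 'a set)) = card V"
    by (rule bij_betw_same_card)
  then show ?thesis
    by (simp add: card_cartesian_product)
qed

lemma card_symp_perp:
  fixes u :: "'a::{field,finite} ^ 4"
  assumes "u \<noteq> 0"
  shows "card {w. symp u w = 0} = CARD('a) ^ 3"
proof -
  obtain w\<^sub>0 where "symp u w\<^sub>0 = 1"
    using exists_symp_eq_1 assms by blast
  then have "card (UNIV :: ('a ^ 4) set) = card {w. symp u w = 0} * CARD('a)"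
    using card_symp_hyperplane_section[of UNIV] by simp
  then have "CARD('a) ^ 3 * CARD('a) = card {w. symp u w = 0} * CARD('a)"
    by (simp add: power_Suc2[symmetric] del: power_Suc)
  then show ?thesis
    by simp
qed

lemma lincomb2_eq: "lincomb2 a u b v = a *s u + b *s v"
  by (simp add: lincomb2_def vector_scalar_mult_def vec_eq_iff)

lemma lin_indep2_imp_nonzero:
  assumes "lin_indep2 u v"
  shows "u \<noteq> 0"
proof
  assume "u = 0"
  then have "lincomb2 1 u 0 v = 0"
    by (simp add: lincomb2_eq)
  with assms show False
    unfolding lin_indep2_def by fastforce
qed

lemma lin_indep2_if_span1_neq:
  fixes u v :: "'a::field ^ 4"
  assumes "u \<noteq> 0" "v \<noteq> 0" "span1 u \<noteq> span1 v"
  shows "lin_indep2 u v"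
  unfolding lin_indep2_def
proof (intro allI impI)
  fix a b
  assume "lincomb2 a u b v = 0"
  then have uv: "a *s u = (- b) *s v"
    by (simp add: lincomb2_eq vector_smult_lneg eq_neg_iff_add_eq_0)
  have "a = 0"
  proof (rule ccontr)
    assume "a \<noteq> 0"
    then have "u = (- b / a) *s v"
      using arg_cong[OF uv, of "\<lambda>x. inverse a *s x"] by (simp add: vector_smult_assoc field_simps)
    then have "u \<in> span1 v"
      unfolding span1_eq_range by (rule image_eqI) simp
    then have "span1 u = span1 v"
      using span1_eq_if_mem assms(1) by blast
    then show False
      using assms(3) by simp
  qed
  then show "a = 0 \<and> b = 0"
    using uv assms(2) by simp
qed

text \<open>Otherwise \<open>symp v\<close> would vanish on the hyperplane \<open>u\<^sup>\<bottom>\<close>, forcing \<open>v\<close> to be a multiple of \<open>u\<close>.\<close>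

lemma exists_symp_perp_not_perp:
  fixes u v :: "'a::field ^ 4"
  assumes uv: "lin_indep2 u v"
  shows "\<exists>w. symp u w = 0 \<and> symp v w \<noteq> 0"
proof (rule ccontr)
  assume "\<not> ?thesis"
  obtain w\<^sub>0 where w\<^sub>0: "symp u w\<^sub>0 = 1"
    using exists_symp_eq_1 lin_indep2_imp_nonzero uv by blast
  have "symp u (w - symp u w *s w\<^sub>0) = 0" for w
    using w\<^sub>0 by (simp add: symp_diff_right)
  with \<open>\<not> ?thesis\<close> have vanish: "symp v (w - symp u w *s w\<^sub>0) = 0" for w
    by blast
  have "symp (v - symp v w\<^sub>0 *s u) w = 0" for w
    using vanish[of w] by (simp add: symp_diff_left symp_diff_right algebra_simps)
  then have "lincomb2 (- symp v w\<^sub>0) u 1 v = 0"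
    using symp_nondegenerate by (force simp: lincomb2_eq vector_smult_lneg)
  then show False
    using uv unfolding lin_indep2_def by (metis one_neq_zero)
qed

lemma card_symp_perp2:
  fixes u v :: "'a::{field,finite} ^ 4"
  assumes uv: "lin_indep2 u v"
  shows "card {w. symp u w = 0 \<and> symp v w = 0} = CARD('a) ^ 2"
proof -
  obtain w where w: "symp u w = 0" "symp v w \<noteq> 0"
    using exists_symp_perp_not_perp uv by blast
  have "card {w. symp u w = 0} = card {x \<in> {w. symp u w = 0}. symp v x = 0} * CARD('a)"
    by (rule card_symp_hyperplane_section[where w\<^sub>0 = "inverse (symp v w) *s w"])
      (use w in \<open>simp_all add: subspace_symp_perp\<close>)
  then have "CARD('a) ^ 2 * CARD('a) = card {w. symp u w = 0 \<and> symp v w = 0} * CARD('a)"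
    using card_symp_perp[OF lin_indep2_imp_nonzero[OF uv]] by (simp add: power_Suc2[symmetric] del: power_Suc)
  then show ?thesis
    by simp
qed

section \<open>The generalized quadrangle \<open>W(q)\<close>\<close>

lemma finite_vector_sets [simp]: "finite (X :: ('a::finite ^ 4) set set)"
  by (rule finite_subset[OF subset_UNIV]) simp

text \<open>For points, \<open>perp x y\<close> holds iff \<open>x = y\<close> or \<open>x\<close> and \<open>y\<close> are collinear in \<open>W(q)\<close>.\<close>

definition perp :: "('a::field ^ 4) set \<Rightarrow> ('a ^ 4) set \<Rightarrow> bool" where
  "perp x y \<longleftrightarrow> (\<forall>a\<in>x. \<forall>b\<in>y. symp a b = 0)"

lemma W_pointE:
  assumes "x \<in> W_points"
  obtains u where "u \<noteq> 0" "x = span1 u"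
  using assms unfolding W_points_def by blast

lemma W_lineE:
  assumes "l \<in> W_lines"
  obtains u v where "lin_indep2 u v" "symp u v = 0" "l = span2 u v"
  using assms unfolding W_lines_def by blast

lemma perp_span1: "perp (span1 u) (span1 v) \<longleftrightarrow> symp u v = 0"
  unfolding perp_def span1_eq_range by auto

lemma perp_sym: "perp x y \<Longrightarrow> perp y x"
  unfolding perp_def by (metis symp_swap neg_equal_0_iff_equal)

lemma perp_refl: "x \<in> W_points \<Longrightarrow> perp x x"
  by (auto elim: W_pointE simp: perp_span1)

lemma card_W_points:
  "card (W_points :: ('a::{field,finite} ^ 4) set set) = CARD('a) ^ 3 + CARD('a) ^ 2 + CARD('a) + 1"
proof -
  have "W_points = {span1 v | v :: 'a ^ 4. v \<in> UNIV \<and> v \<noteq> 0}"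
    unfolding W_points_def by simp
  also have "card \<dots> = (\<Sum>i<4. CARD('a) ^ i)"
    by (rule card_points_in_cone) simp_all
  finally show ?thesis
    by (simp add: numeral_eq_Suc)
qed

lemma card_perp_points:
  assumes "x \<in> (W_points :: ('a::{field,finite} ^ 4) set set)"
  shows "card {y \<in> W_points. perp x y} = CARD('a) ^ 2 + CARD('a) + 1"
proof -
  obtain u where u: "u \<noteq> 0" "x = span1 u"
    using assms by (rule W_pointE)
  have "{y \<in> W_points. perp x y} = {span1 v | v. v \<in> {w. symp u w = 0} \<and> v \<noteq> 0}"
    unfolding u(2) by (auto simp: perp_span1 W_points_def)
  also have "card \<dots> = (\<Sum>i<3. CARD('a) ^ i)"
    by (rule card_points_in_cone) (simp_all add: card_symp_perp[OF u(1)])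
  finally show ?thesis
    by (simp add: numeral_eq_Suc)
qed

lemma card_common_perp_points:
  assumes "x \<in> (W_points :: ('a::{field,finite} ^ 4) set set)" "z \<in> W_points" "x \<noteq> z"
  shows "card {y \<in> W_points. perp x y \<and> perp z y} = CARD('a) + 1"
proof -
  obtain u where u: "u \<noteq> 0" "x = span1 u"
    using assms(1) by (rule W_pointE)
  obtain v where v: "v \<noteq> 0" "z = span1 v"
    using assms(2) by (rule W_pointE)
  have uv: "lin_indep2 u v"
    using lin_indep2_if_span1_neq u v assms(3) by blast
  have "{y \<in> W_points. perp x y \<and> perp z y}
      = {span1 w | w. w \<in> {w. symp u w = 0 \<and> symp v w = 0} \<and> w \<noteq> 0}"
    unfolding u(2) v(2) by (auto simp: perp_span1 W_points_def)
  also have "card \<dots> = (\<Sum>i<2. CARD('a) ^ i)"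
    by (rule card_points_in_cone) (simp_all add: card_symp_perp2[OF uv])
  finally show ?thesis
    by (simp add: numeral_eq_Suc)
qed

lemma subspace_span2: "vec.subspace (span2 u v)"
  and span2_generators: "u \<in> span2 u v" "v \<in> span2 u v"
  by (simp_all add: span2_eq_span vec.span_base)

lemma card_span2:
  fixes u v :: "'a::{field,finite} ^ 4"
  assumes "lin_indep2 u v"
  shows "card (span2 u v) = CARD('a) ^ 2"
proof -
  have "span2 u v = (\<lambda>(a, b). lincomb2 a u b v) ` UNIV"
    unfolding span2_def by auto
  moreover have "inj (\<lambda>(a, b). lincomb2 a u b v)"
  proof (rule injI, clarify)
    fix a b a' b'
    assume "lincomb2 a u b v = lincomb2 a' u b' v"
    then have "lincomb2 (a - a') u (b - b') v = 0"
      by (simp add: lincomb2_def vec_eq_iff algebra_simps)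
    then show "a = a' \<and> b = b'"
      using assms unfolding lin_indep2_def by fastforce
  qed
  ultimately show ?thesis
    by (simp add: card_image power2_eq_square)
qed

lemma symp_span2:
  assumes "symp u v = 0" "x \<in> span2 u v" "y \<in> span2 u v"
  shows "symp x y = 0"
  using assms symp_swap[of u v]
  by (auto simp: span2_def lincomb2_eq symp_add_left symp_add_right)

lemma span1_subset_W_line_iff:
  assumes "l \<in> W_lines"
  shows "span1 w \<subseteq> l \<longleftrightarrow> w \<in> l"
proof -
  have "vec.subspace l"
    using assms subspace_span2 by (auto elim: W_lineE)
  then show ?thesis
    unfolding span1_eq_span using vec.span_minimal vec.span_base by blast
qed

lemma card_points_on_W_line:
  assumes "l \<in> (W_lines :: ('a::{field,finite} ^ 4) set set)"
  shows "card {y \<in> W_points. y \<subseteq> l} = CARD('a) + 1"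
proof -
  obtain u v where uv: "lin_indep2 u v" "l = span2 u v"
    using assms by (rule W_lineE)
  have "{y \<in> W_points. y \<subseteq> l} = {span1 w | w. w \<in> l \<and> w \<noteq> 0}"
    using span1_subset_W_line_iff[OF assms] by (auto simp: W_points_def)
  also have "card \<dots> = (\<Sum>i<2. CARD('a) ^ i)"
    using card_span2[OF uv(1)] vec.subspace_0[OF subspace_span2] vec.subspace_scale[OF subspace_span2]
    unfolding uv(2) by (intro card_points_in_cone) simp_all
  finally show ?thesis
    by (simp add: numeral_eq_Suc)
qed

lemma perp_if_on_W_line:
  assumes "l \<in> W_lines" "x \<subseteq> l" "y \<subseteq> l"
  shows "perp x y"
  using assms symp_span2 unfolding perp_def by (fastforce elim: W_lineE)

lemma W_line_unique:
  fixes x y :: "('a::{field,finite} ^ 4) set"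
  assumes "x \<in> W_points" "y \<in> W_points" "x \<noteq> y"
    and "l \<in> W_lines" "x \<subseteq> l" "y \<subseteq> l" and "l' \<in> W_lines" "x \<subseteq> l'" "y \<subseteq> l'"
  shows "l = l'"
proof -
  obtain a where a: "a \<noteq> 0" "x = span1 a"
    using assms(1) by (rule W_pointE)
  obtain b where b: "b \<noteq> 0" "y = span1 b"
    using assms(2) by (rule W_pointE)
  have ab: "lin_indep2 a b"
    using lin_indep2_if_span1_neq a b assms(3) by blast
  have "span2 a b = m" if "m \<in> W_lines" "x \<subseteq> m" "y \<subseteq> m" for m
  proof -
    obtain u v where uv: "lin_indep2 u v" "m = span2 u v"
      using \<open>m \<in> W_lines\<close> by (rule W_lineE)
    have "a \<in> m" "b \<in> m"
      using that a b by auto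
    then have "span2 a b \<subseteq> m"
      unfolding uv(2) span2_eq_span by (intro vec.span_minimal) auto
    moreover have "card (span2 a b) = card m"
      using card_span2[OF ab] card_span2[OF uv(1)] uv(2) by simp
    ultimately show ?thesis
      by (intro card_subset_eq) auto
  qed
  then show ?thesis
    using assms by metis
qed

lemma W_line_exists:
  assumes "x \<in> W_points" "y \<in> W_points" "x \<noteq> y" "perp x y"
  shows "\<exists>l\<in>W_lines. x \<subseteq> l \<and> y \<subseteq> l"
proof -
  obtain a where a: "a \<noteq> 0" "x = span1 a"
    using assms(1) by (rule W_pointE)
  obtain b where b: "b \<noteq> 0" "y = span1 b"
    using assms(2) by (rule W_pointE)
  have l: "span2 a b \<in> W_lines"
    using lin_indep2_if_span1_neq a b assms(3,4) perp_span1 unfolding W_lines_def by blast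
  then have "x \<subseteq> span2 a b" "y \<subseteq> span2 a b"
    using span1_subset_W_line_iff[OF l] span2_generators a b by auto
  with l show ?thesis
    by blast
qed

lemma points_on_W_line_eq_common_perp:
  fixes x y :: "('a::{field,finite} ^ 4) set"
  assumes "x \<in> W_points" "y \<in> W_points" "x \<noteq> y" "l \<in> W_lines" "x \<subseteq> l" "y \<subseteq> l"
  shows "{w \<in> W_points. w \<subseteq> l} = {w \<in> W_points. perp x w \<and> perp y w}"
proof (rule card_subset_eq)
  show "{w \<in> W_points. w \<subseteq> l} \<subseteq> {w \<in> W_points. perp x w \<and> perp y w}"
    using assms perp_if_on_W_line by blast
  show "card {w \<in> W_points. w \<subseteq> l} = card {w \<in> W_points. perp x w \<and> perp y w}"
    using card_points_on_W_line[OF assms(4)] card_common_perp_points[OF assms(1-3)] by simp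
qed simp

text \<open>The lines through \<open>x\<close> partition the points \<open>y \<noteq> x\<close> perpendicular to \<open>x\<close>.\<close>

lemma card_W_lines_through:
  assumes x: "x \<in> (W_points :: ('a::{field,finite} ^ 4) set set)"
  shows "card {l \<in> W_lines. x \<subseteq> l} = CARD('a) + 1"
proof -
  let ?q = "CARD('a)"
  define T where "T = {l \<in> W_lines. x \<subseteq> l}"
  define pts where "pts l = {y \<in> W_points. y \<subseteq> l} - {x}" for l
  have partition: "{y \<in> W_points. perp x y} - {x} = (\<Union>l\<in>T. pts l)"
  proof
    show "{y \<in> W_points. perp x y} - {x} \<subseteq> (\<Union>l\<in>T. pts l)"
      using W_line_exists[OF x] unfolding T_def pts_def by fastforce
    show "(\<Union>l\<in>T. pts l) \<subseteq> {y \<in> W_points. perp x y} - {x}"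
      using perp_if_on_W_line unfolding T_def pts_def by blast
  qed
  have disjoint: "pts l \<inter> pts l' = {}" if "l \<in> T" "l' \<in> T" "l \<noteq> l'" for l l'
  proof -
    have False if "y \<in> pts l" "y \<in> pts l'" for y
      using W_line_unique[OF x, of y l l'] that \<open>l \<in> T\<close> \<open>l' \<in> T\<close> \<open>l \<noteq> l'\<close>
      unfolding T_def pts_def by blast
    then show ?thesis
      by blast
  qed
  have "?q ^ 2 + ?q = card ({y \<in> W_points. perp x y} - {x})"
    using card_perp_points[OF x] perp_refl[OF x] x by (simp add: card_Diff_singleton)
  also have "\<dots> = (\<Sum>l\<in>T. card (pts l))"
    unfolding partition by (rule card_UN_disjoint) (use disjoint in auto)
  also have "\<dots> = (\<Sum>l\<in>T. ?q)"
    by (rule sum.cong) (auto simp: T_def pts_def card_Diff_singleton card_points_on_W_line x)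
  finally have "(?q + 1) * ?q = card T * ?q"
    by (simp add: power2_eq_square algebra_simps)
  moreover have "?q \<noteq> 0"
    using two_le_card_field[where 'a='a] by linarith
  ultimately show ?thesis
    unfolding T_def by (metis mult_right_cancel)
qed

lemma card_W_lines_through_two:
  assumes x: "x \<in> (W_points :: ('a::{field,finite} ^ 4) set set)" and z: "z \<in> W_points"
  shows "card {l \<in> W_lines. x \<subseteq> l \<and> z \<subseteq> l} = CARD('a) * of_bool (x = z) + of_bool (perp x z)"
proof (cases "x = z")
  case True
  then show ?thesis
    using card_W_lines_through[OF x] perp_refl[OF x] by simp
next
  case False
  show ?thesis
  proof (cases "perp x z")
    case True
    then obtain l where l: "l \<in> W_lines" "x \<subseteq> l" "z \<subseteq> l"
      using W_line_exists[OF x z \<open>x \<noteq> z\<close>] by blast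
    then have "{l \<in> W_lines. x \<subseteq> l \<and> z \<subseteq> l} = {l}"
      using W_line_unique[OF x z \<open>x \<noteq> z\<close>] by blast
    then show ?thesis
      using False True by simp
  next
    case False
    then have "{l \<in> W_lines. x \<subseteq> l \<and> z \<subseteq> l} = {}"
      using perp_if_on_W_line by blast
    then show ?thesis
      using \<open>x \<noteq> z\<close> False by simp
  qed
qed

text \<open>With \<open>B\<close> the perpendicularity matrix of \<open>W(q)\<close> one has \<open>B\<^sup>2 = q\<^sup>2 I + (q + 1) J\<close>,
  hence \<open>(q I + B)\<^sup>2 = 2 q (q I + B) + (q + 1) J\<close>.\<close>

lemma perp_matrix_square:
  assumes x: "x \<in> (W_points :: ('a::{field,finite} ^ 4) set set)" and z: "z \<in> W_points"
  defines "q \<equiv> real CARD('a)"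
  shows "(\<Sum>y\<in>W_points. (q * of_bool (x = y) + of_bool (perp x y)) * (q * of_bool (y = z) + of_bool (perp y z)))
    = 2 * q * (q * of_bool (x = z) + of_bool (perp x z)) + (q + 1)"
proof -
  let ?P = "W_points :: ('a ^ 4) set set"
  have expand: "(q * of_bool (x = y) + of_bool (perp x y)) * (q * of_bool (y = z) + of_bool (perp y z))
     = q * q * (of_bool (x = y) * of_bool (y = z)) + q * (of_bool (x = y) * of_bool (perp y z))
       + q * (of_bool (y = z) * of_bool (perp x y)) + of_bool (perp x y \<and> perp y z)" for y
    by (simp add: algebra_simps)
  have "(\<Sum>y\<in>?P. of_bool (x = y) * of_bool (y = z)) = (of_bool (x = z) :: real)"
    and "(\<Sum>y\<in>?P. of_bool (x = y) * of_bool (perp y z)) = (of_bool (perp x z) :: real)"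
    and "(\<Sum>y\<in>?P. of_bool (y = z) * of_bool (perp x y)) = (of_bool (perp x z) :: real)"
    using x z by auto
  moreover have "(\<Sum>y\<in>?P. of_bool (perp x y \<and> perp y z)) = (if x = z then q\<^sup>2 + q + 1 else q + 1)"
  proof (cases "x = z")
    case True
    then have "?P \<inter> {y. perp x y \<and> perp y z} = {y \<in> ?P. perp x y}"
      using perp_sym by blast
    then show ?thesis
      using True card_perp_points[OF x] by (simp add: q_def)
  next
    case False
    have "?P \<inter> {y. perp x y \<and> perp y z} = {y \<in> ?P. perp x y \<and> perp z y}"
      using perp_sym by blast
    then show ?thesis
      using False card_common_perp_points[OF x z] by (simp add: q_def)
  qed
  ultimately show ?thesis
    unfolding expand sum.distrib sum_distrib_left[symmetric]
    using perp_refl[OF x] by (simp add: algebra_simps power2_eq_square)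
qed

section \<open>A spectral bound for quadratic forms\<close>

definition mat_vec :: "'p set \<Rightarrow> ('p \<Rightarrow> 'p \<Rightarrow> real) \<Rightarrow> ('p \<Rightarrow> real) \<Rightarrow> 'p \<Rightarrow> real" where
  "mat_vec P A v x = (\<Sum>y\<in>P. A x y * v y)"

definition mat_mul :: "'p set \<Rightarrow> ('p \<Rightarrow> 'p \<Rightarrow> real) \<Rightarrow> ('p \<Rightarrow> 'p \<Rightarrow> real) \<Rightarrow> 'p \<Rightarrow> 'p \<Rightarrow> real" where
  "mat_mul P A B x z = (\<Sum>y\<in>P. A x y * B y z)"

lemma mat_vec_mat_mul: "mat_vec P (mat_mul P A B) v x = mat_vec P A (mat_vec P B v) x"
proof -
  have "mat_vec P (mat_mul P A B) v x = (\<Sum>z\<in>P. \<Sum>y\<in>P. A x y * B y z * v z)"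
    by (simp add: mat_vec_def mat_mul_def sum_distrib_right)
  also have "\<dots> = mat_vec P A (mat_vec P B v) x"
    by (subst sum.swap) (simp add: mat_vec_def sum_distrib_left mult.assoc)
  finally show ?thesis .
qed

lemma sum_mult_mat_vec_symmetric:
  assumes "\<And>x y. x \<in> P \<Longrightarrow> y \<in> P \<Longrightarrow> A x y = A y x"
  shows "(\<Sum>x\<in>P. u x * mat_vec P A v x) = (\<Sum>y\<in>P. mat_vec P A u y * v y)"
proof -
  have "(\<Sum>x\<in>P. u x * mat_vec P A v x) = (\<Sum>x\<in>P. \<Sum>y\<in>P. A y x * u x * v y)"
    using assms by (auto simp: mat_vec_def sum_distrib_left mult_ac intro!: sum.cong)
  also have "\<dots> = (\<Sum>y\<in>P. mat_vec P A u y * v y)"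
    by (subst sum.swap) (simp add: mat_vec_def sum_distrib_right)
  finally show ?thesis .
qed

lemma mat_mul_symmetric:
  assumes "\<And>x y. x \<in> P \<Longrightarrow> y \<in> P \<Longrightarrow> A x y = A y x" and "x \<in> P" "y \<in> P"
  shows "mat_mul P A A x y = mat_mul P A A y x"
  unfolding mat_mul_def using assms by (auto simp: mult.commute intro: sum.cong)

lemma mat_vec_twice_on_zero_sum:
  assumes "\<And>x z. x \<in> P \<Longrightarrow> z \<in> P \<Longrightarrow> mat_mul P M M x z = d * M x z + e"
    and "(\<Sum>x\<in>P. v x) = 0" and "x \<in> P"
  shows "mat_vec P M (mat_vec P M v) x = d * mat_vec P M v x"
proof -
  have "mat_vec P M (mat_vec P M v) x = mat_vec P (mat_mul P M M) v x"
    by (simp add: mat_vec_mat_mul)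
  also have "\<dots> = (\<Sum>z\<in>P. (d * M x z + e) * v z)"
    using assms(1,3) by (simp add: mat_vec_def)
  also have "\<dots> = d * mat_vec P M v x + e * (\<Sum>z\<in>P. v z)"
    by (simp add: mat_vec_def distrib_right sum.distrib sum_distrib_left mult.assoc)
  finally show ?thesis
    using assms(2) by simp
qed

text \<open>If \<open>M = A\<^sup>2\<close> satisfies \<open>M\<^sup>2 = c\<^sup>2 M + e J\<close>, the eigenvalues of \<open>A\<close> on the orthogonal complement
  of the all-ones vector are \<open>0\<close> or \<open>\<plusminus>c\<close>.  Avoiding eigenvectors: on such \<open>v\<close>, \<open>M\<^sup>2 v = c\<^sup>2 M v\<close>, so
  \<open>0 \<le> |M v - c\<^sup>2 v|\<^sup>2 = c\<^sup>2 (c\<^sup>2 |v|\<^sup>2 - |A v|\<^sup>2)\<close>.\<close>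

lemma sum_sq_mat_vec_le_on_zero_sum:
  fixes A :: "'p \<Rightarrow> 'p \<Rightarrow> real"
  assumes sym: "\<And>x y. x \<in> P \<Longrightarrow> y \<in> P \<Longrightarrow> A x y = A y x"
    and fourth: "\<And>x z. x \<in> P \<Longrightarrow> z \<in> P \<Longrightarrow>
      mat_mul P (mat_mul P A A) (mat_mul P A A) x z = c\<^sup>2 * mat_mul P A A x z + e"
    and "c \<noteq> 0" and zero_sum: "(\<Sum>x\<in>P. v x) = 0"
  shows "(\<Sum>x\<in>P. (mat_vec P A v x)\<^sup>2) \<le> c\<^sup>2 * (\<Sum>x\<in>P. (v x)\<^sup>2)"
proof -
  define M where "M = mat_mul P A A"
  define Mv where "Mv = mat_vec P M v"
  define \<alpha> where "\<alpha> = (\<Sum>x\<in>P. v x * Mv x)"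
  have "\<alpha> = (\<Sum>x\<in>P. v x * mat_vec P A (mat_vec P A v) x)"
    by (simp add: \<alpha>_def Mv_def M_def mat_vec_mat_mul)
  also have "\<dots> = (\<Sum>x\<in>P. (mat_vec P A v x)\<^sup>2)"
    using sum_mult_mat_vec_symmetric[OF sym, where u = v and v = "mat_vec P A v"]
    by (simp add: power2_eq_square)
  finally have \<alpha>: "\<alpha> = (\<Sum>x\<in>P. (mat_vec P A v x)\<^sup>2)" .
  have MMv: "mat_vec P M Mv x = c\<^sup>2 * Mv x" if "x \<in> P" for x
    using mat_vec_twice_on_zero_sum[of P M, OF _ zero_sum that] fourth by (simp add: M_def Mv_def)
  have "M x y = M y x" if "x \<in> P" "y \<in> P" for x y
    unfolding M_def using mat_mul_symmetric[OF sym that] .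
  then have "(\<Sum>x\<in>P. (Mv x)\<^sup>2) = (\<Sum>x\<in>P. v x * mat_vec P M Mv x)"
    using sum_mult_mat_vec_symmetric[where u = v and v = Mv] by (simp add: Mv_def power2_eq_square)
  also have "\<dots> = c\<^sup>2 * \<alpha>"
    using MMv by (simp add: \<alpha>_def sum_distrib_left mult_ac)
  finally have Mv_sq: "(\<Sum>x\<in>P. (Mv x)\<^sup>2) = c\<^sup>2 * \<alpha>" .
  have "0 \<le> (\<Sum>x\<in>P. (Mv x - c\<^sup>2 * v x)\<^sup>2)"
    by (intro sum_nonneg) simp
  also have "\<dots> = (\<Sum>x\<in>P. (Mv x)\<^sup>2) - 2 * c\<^sup>2 * \<alpha> + c\<^sup>2 * c\<^sup>2 * (\<Sum>x\<in>P. (v x)\<^sup>2)"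
    by (simp add: power2_diff sum.distrib sum_subtractf sum_distrib_left \<alpha>_def mult_ac power_mult_distrib)
  also have "\<dots> = c\<^sup>2 * (c\<^sup>2 * (\<Sum>x\<in>P. (v x)\<^sup>2) - \<alpha>)"
    using Mv_sq by (simp add: algebra_simps)
  finally show ?thesis
    using \<open>c \<noteq> 0\<close> \<alpha> by (simp add: zero_le_mult_iff)
qed

lemma quadratic_form_ge_on_zero_sum:
  fixes A :: "'p \<Rightarrow> 'p \<Rightarrow> real"
  assumes sym: "\<And>x y. x \<in> P \<Longrightarrow> y \<in> P \<Longrightarrow> A x y = A y x"
    and fourth: "\<And>x z. x \<in> P \<Longrightarrow> z \<in> P \<Longrightarrow>
      mat_mul P (mat_mul P A A) (mat_mul P A A) x z = c\<^sup>2 * mat_mul P A A x z + e"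
    and "c > 0" and zero_sum: "(\<Sum>x\<in>P. v x) = 0"
  shows "(\<Sum>x\<in>P. v x * mat_vec P A v x) \<ge> - c * (\<Sum>x\<in>P. (v x)\<^sup>2)"
proof -
  have "0 \<le> (\<Sum>x\<in>P. (mat_vec P A v x + c * v x)\<^sup>2)"
    by (intro sum_nonneg) simp
  also have "\<dots> = (\<Sum>x\<in>P. (mat_vec P A v x)\<^sup>2) + 2 * c * (\<Sum>x\<in>P. v x * mat_vec P A v x)
      + c\<^sup>2 * (\<Sum>x\<in>P. (v x)\<^sup>2)"
    by (simp add: power2_sum sum.distrib sum_distrib_left algebra_simps power_mult_distrib)
  also have "\<dots> \<le> 2 * c * ((\<Sum>x\<in>P. v x * mat_vec P A v x) + c * (\<Sum>x\<in>P. (v x)\<^sup>2))"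
    using sum_sq_mat_vec_le_on_zero_sum[OF sym fourth _ zero_sum] \<open>c > 0\<close>
    by (simp add: algebra_simps power2_eq_square)
  finally show ?thesis
    using \<open>c > 0\<close> by (simp add: zero_le_mult_iff)
qed

lemma sum_centred_indicator:
  assumes "finite P" "S \<subseteq> P" "P \<noteq> {}"
  shows "(\<Sum>x\<in>P. of_bool (x \<in> S) - real (card S) / card P) = 0"
    and "(\<Sum>x\<in>P. (of_bool (x \<in> S) - real (card S) / card P)\<^sup>2) = card S - (card S)\<^sup>2 / card P"
proof -
  define n where "n = real (card P)"
  define s where "s = real (card S)"
  define v where "v x = of_bool (x \<in> S) - s / n" for x
  have "n > 0"
    using assms by (simp add: n_def card_gt_0_iff)
  have restrict: "(\<Sum>x\<in>P. f x * of_bool (x \<in> S)) = (\<Sum>x\<in>S. f x)" for f :: "'a \<Rightarrow> real"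
    using assms by (simp add: Int_absorb1)
  have zero_sum: "(\<Sum>x\<in>P. v x) = 0"
    using restrict[of "\<lambda>_. 1"] \<open>n > 0\<close> by (simp add: v_def sum_subtractf s_def n_def)
  have "(v x)\<^sup>2 = v x * of_bool (x \<in> S) - s / n * v x" for x
    by (cases "x \<in> S") (simp_all add: v_def power2_eq_square algebra_simps)
  then have "(\<Sum>x\<in>P. (v x)\<^sup>2) = (\<Sum>x\<in>P. v x * of_bool (x \<in> S)) - s / n * (\<Sum>x\<in>P. v x)"
    by (simp add: sum_subtractf sum_distrib_left)
  also have "\<dots> = s - s\<^sup>2 / n"
    using zero_sum assms(2) by (simp add: restrict v_def s_def power2_eq_square subset_iff right_diff_distrib)
  finally show "(\<Sum>x\<in>P. (of_bool (x \<in> S) - real (card S) / card P)\<^sup>2) = card S - (card S)\<^sup>2 / card P"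
    by (simp add: v_def s_def n_def)
  from zero_sum show "(\<Sum>x\<in>P. of_bool (x \<in> S) - real (card S) / card P) = 0"
    by (simp add: v_def s_def n_def)
qed

lemma indicator_quadratic_form_ge:
  fixes A :: "'p \<Rightarrow> 'p \<Rightarrow> real" and c e r :: real
  assumes "finite P" and sym: "\<And>x y. x \<in> P \<Longrightarrow> y \<in> P \<Longrightarrow> A x y = A y x"
    and fourth: "\<And>x z. x \<in> P \<Longrightarrow> z \<in> P \<Longrightarrow>
      mat_mul P (mat_mul P A A) (mat_mul P A A) x z = c\<^sup>2 * mat_mul P A A x z + e"
    and "c > 0" and rows: "\<And>x. x \<in> P \<Longrightarrow> (\<Sum>y\<in>P. A x y) = r"
    and "S \<subseteq> P" and "P \<noteq> {}"
  shows "(\<Sum>x\<in>S. \<Sum>y\<in>S. A x y) - r * (real (card S))\<^sup>2 / card P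
    \<ge> - c * (card S - (real (card S))\<^sup>2 / card P)"
proof -
  define n where "n = real (card P)"
  define s where "s = real (card S)"
  define v where "v x = of_bool (x \<in> S) - s / n" for x
  have zero_sum: "(\<Sum>x\<in>P. v x) = 0" and norm: "(\<Sum>x\<in>P. (v x)\<^sup>2) = s - s\<^sup>2 / n"
    using sum_centred_indicator[OF \<open>finite P\<close> \<open>S \<subseteq> P\<close> \<open>P \<noteq> {}\<close>] by (simp_all add: v_def s_def n_def)
  have restrict: "(\<Sum>x\<in>P. f x * of_bool (x \<in> S)) = (\<Sum>x\<in>S. f x)" for f :: "'p \<Rightarrow> real"
    using \<open>finite P\<close> \<open>S \<subseteq> P\<close> by (simp add: Int_absorb1)
  have Av: "mat_vec P A v x = (\<Sum>y\<in>S. A x y) - s / n * r" if "x \<in> P" for x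
  proof -
    have "mat_vec P A v x = (\<Sum>y\<in>P. A x y * of_bool (y \<in> S)) - s / n * (\<Sum>y\<in>P. A x y)"
      by (simp add: mat_vec_def v_def right_diff_distrib sum_subtractf sum_distrib_left mult_ac)
    then show ?thesis
      by (simp only: restrict rows[OF that])
  qed
  have "(\<Sum>x\<in>P. v x * mat_vec P A v x) = (\<Sum>x\<in>P. v x * (\<Sum>y\<in>S. A x y) - s / n * r * v x)"
    by (rule sum.cong[OF refl]) (simp add: Av right_diff_distrib mult_ac)
  also have "\<dots> = (\<Sum>x\<in>P. v x * (\<Sum>y\<in>S. A x y))"
    using zero_sum by (simp add: sum_subtractf flip: sum_distrib_left sum_divide_distrib)
  also have "\<dots> = (\<Sum>x\<in>S. \<Sum>y\<in>S. A x y) - s / n * (\<Sum>y\<in>S. \<Sum>x\<in>P. A x y)"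
    by (simp add: v_def restrict algebra_simps sum_subtractf sum_distrib_left sum.swap[of _ P S])
  also have "(\<Sum>y\<in>S. \<Sum>x\<in>P. A x y) = r * s"
    using rows sym \<open>S \<subseteq> P\<close> by (simp add: s_def subset_iff cong: sum.cong)
  finally have "(\<Sum>x\<in>P. v x * mat_vec P A v x) = (\<Sum>x\<in>S. \<Sum>y\<in>S. A x y) - r * s\<^sup>2 / n"
    by (simp add: power2_eq_square)
  with quadratic_form_ge_on_zero_sum[OF sym fourth \<open>c > 0\<close> zero_sum] show ?thesis
    unfolding norm s_def n_def by simp
qed

section \<open>Polarity graphs of \<open>W(q)\<close>\<close>

locale W_polarity =
  fixes \<sigma> :: "('a::{field,finite} ^ 4) set \<Rightarrow> ('a ^ 4) set"
  assumes polarity: "is_polarity \<sigma>"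
begin

lemma bij_points_lines: "bij_betw \<sigma> W_points W_lines"
  and involution: "x \<in> W_points \<union> W_lines \<Longrightarrow> \<sigma> (\<sigma> x) = x"
  and incidence_iff: "p \<in> W_points \<Longrightarrow> l \<in> W_lines \<Longrightarrow> p \<subseteq> l \<longleftrightarrow> \<sigma> l \<subseteq> \<sigma> p"
  using polarity unfolding is_polarity_def by auto

lemma sigma_point: "x \<in> W_points \<Longrightarrow> \<sigma> x \<in> W_lines"
  using bij_points_lines by (auto dest: bij_betwE)

lemma sigma_line: "l \<in> W_lines \<Longrightarrow> \<sigma> l \<in> W_points"
  using polarity unfolding is_polarity_def by (auto dest: bij_betwE)

lemma incident_sigma_sym:
  assumes "x \<in> W_points" "y \<in> W_points"
  shows "x \<subseteq> \<sigma> y \<longleftrightarrow> y \<subseteq> \<sigma> x"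
  using incidence_iff[OF assms(1) sigma_point[OF assms(2)]] involution assms(2) by simp

lemma card_common_neighbours:
  assumes x: "x \<in> W_points" and z: "z \<in> W_points"
  shows "card {y \<in> W_points. x \<subseteq> \<sigma> y \<and> z \<subseteq> \<sigma> y} = CARD('a) * of_bool (x = z) + of_bool (perp x z)"
proof -
  have "bij_betw \<sigma> {y \<in> W_points. x \<subseteq> \<sigma> y \<and> z \<subseteq> \<sigma> y} {l \<in> W_lines. x \<subseteq> l \<and> z \<subseteq> l}"
    using bij_points_lines by (rule bij_betw_Collect) simp
  then show ?thesis
    using card_W_lines_through_two[OF x z] by (simp add: bij_betw_same_card)
qed

lemma pole_of_line_through_absolute:
  assumes x: "x \<in> W_points" "x \<subseteq> \<sigma> x" and l: "l \<in> W_lines" "x \<subseteq> l" "\<sigma> l \<subseteq> l"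
  shows "\<sigma> l = x"
proof (rule ccontr)
  assume ne: "\<sigma> l \<noteq> x"
  have "\<sigma> l \<subseteq> \<sigma> x"
    using incidence_iff[OF x(1) l(1)] l(2) by simp
  then have "l = \<sigma> x"
    using W_line_unique[OF sigma_line[OF l(1)] x(1) ne l(1) l(3) l(2) sigma_point[OF x(1)]] x(2) by blast
  then show False
    using ne involution x(1) by simp
qed

lemma absolute_points_not_collinear:
  assumes x: "x \<in> W_points" "x \<subseteq> \<sigma> x" and y: "y \<in> W_points" "y \<subseteq> \<sigma> y" and "x \<noteq> y"
    and l: "l \<in> W_lines" "x \<subseteq> l" "y \<subseteq> l"
  shows False
proof -
  have "\<sigma> l \<subseteq> \<sigma> x" "\<sigma> l \<subseteq> \<sigma> y"
    using incidence_iff l x(1) y(1) by auto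
  then have "perp x (\<sigma> l)" "perp y (\<sigma> l)"
    using perp_if_on_W_line[OF sigma_point[OF x(1)] x(2)] perp_if_on_W_line[OF sigma_point[OF y(1)] y(2)]
    by blast+
  then have "\<sigma> l \<subseteq> l"
    using points_on_W_line_eq_common_perp[OF x(1) y(1) \<open>x \<noteq> y\<close> l] sigma_line[OF l(1)] by blast
  then have "\<sigma> l = x" "\<sigma> l = y"
    using pole_of_line_through_absolute[OF x l(1,2)] pole_of_line_through_absolute[OF y l(1,3)] by blast+
  then show False
    using \<open>x \<noteq> y\<close> by simp
qed

text \<open>Distinct absolute points have disjoint pencils of \<open>q + 1\<close> lines, and there are only
  \<open>(q\<^sup>2 + 1)(q + 1)\<close> lines.\<close>

lemma card_absolute_points_le: "card {x \<in> W_points. x \<subseteq> \<sigma> x} \<le> CARD('a) ^ 2 + 1"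
proof -
  let ?q = "CARD('a)"
  define Abs where "Abs = {x \<in> W_points. x \<subseteq> \<sigma> x}"
  define pencil where "pencil x = {l \<in> W_lines. x \<subseteq> l}" for x :: "('a ^ 4) set"
  have disjoint: "pencil x \<inter> pencil y = {}" if "x \<in> Abs" "y \<in> Abs" "x \<noteq> y" for x y
    using absolute_points_not_collinear that unfolding Abs_def pencil_def by blast
  have "card Abs * (?q + 1) = (\<Sum>x\<in>Abs. card (pencil x))"
    by (simp add: Abs_def pencil_def card_W_lines_through)
  also have "\<dots> = card (\<Union>x\<in>Abs. pencil x)"
    by (rule card_UN_disjoint[symmetric]) (use disjoint in auto)
  also have "\<dots> \<le> card (W_lines :: ('a ^ 4) set set)"
    by (rule card_mono) (auto simp: pencil_def)
  also have "\<dots> = card (W_points :: ('a ^ 4) set set)"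
    using bij_points_lines by (simp add: bij_betw_same_card)
  also have "\<dots> = (?q ^ 2 + 1) * (?q + 1)"
    by (simp add: card_W_points algebra_simps power2_eq_square power3_eq_cube)
  finally have "card Abs * (?q + 1) \<le> (?q ^ 2 + 1) * (?q + 1)" .
  then show ?thesis
    unfolding Abs_def mult_le_cancel2 by simp
qed

definition adj :: "('a ^ 4) set \<Rightarrow> ('a ^ 4) set \<Rightarrow> real" where
  "adj x y = of_bool (x \<subseteq> \<sigma> y)"

lemma adj_symmetric: "x \<in> W_points \<Longrightarrow> y \<in> W_points \<Longrightarrow> adj x y = adj y x"
  unfolding adj_def using incident_sigma_sym by simp

lemma adj_square:
  assumes x: "x \<in> W_points" and z: "z \<in> W_points"
  shows "mat_mul W_points adj adj x z = real CARD('a) * of_bool (x = z) + of_bool (perp x z)"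
proof -
  have "mat_mul W_points adj adj x z = (\<Sum>w\<in>W_points. of_bool (x \<subseteq> \<sigma> w \<and> z \<subseteq> \<sigma> w))"
    unfolding mat_mul_def by (rule sum.cong) (auto simp: adj_def incident_sigma_sym[OF _ z])
  also have "\<dots> = real (card {w \<in> W_points. x \<subseteq> \<sigma> w \<and> z \<subseteq> \<sigma> w})"
    by (simp add: Int_def conj_commute)
  finally show ?thesis
    by (simp add: card_common_neighbours[OF x z])
qed

lemma adj_row_sum: "x \<in> W_points \<Longrightarrow> (\<Sum>y\<in>W_points. adj x y) = real CARD('a) + 1"
  using card_common_neighbours[of x x] perp_refl[of x] by (simp add: adj_def Int_def)

lemma adj_fourth_power:
  assumes x: "x \<in> W_points" and z: "z \<in> W_points"
  shows "mat_mul W_points (mat_mul W_points adj adj) (mat_mul W_points adj adj) x z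
    = 2 * real CARD('a) * mat_mul W_points adj adj x z + (real CARD('a) + 1)"
proof -
  have "mat_mul W_points (mat_mul W_points adj adj) (mat_mul W_points adj adj) x z
    = (\<Sum>y\<in>W_points. (real CARD('a) * of_bool (x = y) + of_bool (perp x y))
        * (real CARD('a) * of_bool (y = z) + of_bool (perp y z)))"
    unfolding mat_mul_def[of _ "mat_mul W_points adj adj"]
    by (rule sum.cong) (simp_all add: adj_square x z)
  then show ?thesis
    using perp_matrix_square[OF x z] by (simp add: adj_square x z)
qed

lemma adj_sum_on_independent_le:
  assumes "polarity_independent \<sigma> S"
  shows "(\<Sum>x\<in>S. \<Sum>y\<in>S. adj x y) \<le> real CARD('a) ^ 2 + 1"
proof -
  have S: "S \<subseteq> W_points" and indep: "\<And>x y. x \<in> S \<Longrightarrow> y \<in> S \<Longrightarrow> x \<noteq> y \<Longrightarrow> \<not> x \<subseteq> \<sigma> y"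
    using assms unfolding polarity_independent_def polarity_adj_def by auto
  have "(\<Sum>y\<in>S. adj x y) = of_bool (x \<subseteq> \<sigma> x)" if "x \<in> S" for x
  proof -
    have "(\<Sum>y\<in>S. adj x y) = (\<Sum>y\<in>S. if y = x then of_bool (x \<subseteq> \<sigma> x) else 0)"
      by (rule sum.cong) (use indep that in \<open>auto simp: adj_def\<close>)
    then show ?thesis
      using that by simp
  qed
  then have "(\<Sum>x\<in>S. \<Sum>y\<in>S. adj x y) = real (card {x \<in> S. x \<subseteq> \<sigma> x})"
    by (simp add: Int_def)
  also have "\<dots> \<le> real (card {x \<in> W_points. x \<subseteq> \<sigma> x})"
    using S by (intro of_nat_mono card_mono) auto
  also have "\<dots> \<le> real (CARD('a) ^ 2 + 1)"
    using card_absolute_points_le by (simp only: of_nat_le_iff)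
  finally show ?thesis
    by simp
qed

lemma adj_indicator_quadratic_form_ge:
  assumes "S \<subseteq> W_points"
  defines "n \<equiv> real (card (W_points :: ('a ^ 4) set set))"
  shows "(\<Sum>x\<in>S. \<Sum>y\<in>S. adj x y) - (real CARD('a) + 1) * (real (card S))\<^sup>2 / n
    \<ge> - sqrt (2 * real CARD('a)) * (card S - (real (card S))\<^sup>2 / n)"
proof -
  have fourth: "mat_mul W_points (mat_mul W_points adj adj) (mat_mul W_points adj adj) x z
    = (sqrt (2 * real CARD('a)))\<^sup>2 * mat_mul W_points adj adj x z + (real CARD('a) + 1)"
    if "x \<in> W_points" "z \<in> W_points" for x z
    using adj_fourth_power[OF that] by simp
  have "(W_points :: ('a ^ 4) set set) \<noteq> {}"
    using card_W_points[where 'a='a] by auto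
  from indicator_quadratic_form_ge[OF _ adj_symmetric fourth _ adj_row_sum assms(1) this] show ?thesis
    by (simp add: n_def)
qed

end

lemma le_quadratic_root:
  fixes k c a s :: real
  assumes "k > 0" and "k * s\<^sup>2 - c * s \<le> a"
  shows "s \<le> (c + sqrt (4 * k * a + c\<^sup>2)) / (2 * k)"
proof -
  have "(2 * k * s - c)\<^sup>2 = 4 * k * (k * s\<^sup>2 - c * s) + c\<^sup>2"
    by (simp add: power2_eq_square algebra_simps)
  also have "\<dots> \<le> 4 * k * a + c\<^sup>2"
    using assms by (simp add: mult_left_mono)
  finally have "2 * k * s - c \<le> sqrt (4 * k * a + c\<^sup>2)"
    by (rule real_le_rsqrt)
  then show ?thesis
    using assms(1) by (simp add: field_simps)
qed

theorem mainTheorem11: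
  fixes \<sigma> :: "('a::{field,finite} ^ 4) set \<Rightarrow> ('a ^ 4) set"
    and S :: "('a ^ 4) set set"
  assumes "is_polarity \<sigma>"
    and "polarity_independent \<sigma> S"
  shows "let q = real CARD('a); k = (q + sqrt (2*q) + 1) / (q^3 + q^2 + q + 1) in
         real (card S) \<le> (sqrt (2*q) + sqrt (2*q + 4*(q^2+1)*k)) / (2*k)"
proof -
  interpret W_polarity \<sigma>
    by (rule W_polarity.intro) (rule assms(1))
  define q where "q = real CARD('a)"
  define n where "n = q^3 + q^2 + q + 1"
  define c where "c = sqrt (2 * q)"
  define k where "k = (q + c + 1) / n"
  define s where "s = real (card S)"
  have S: "S \<subseteq> W_points"
    using assms(2) by (simp add: polarity_independent_def)
  have card_P: "real (card (W_points :: ('a ^ 4) set set)) = n"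
    by (simp add: card_W_points n_def q_def)
  have "(\<Sum>x\<in>S. \<Sum>y\<in>S. adj x y) - (q + 1) * s\<^sup>2 / n \<ge> - c * (s - s\<^sup>2 / n)"
    using adj_indicator_quadratic_form_ge[OF S] card_P by (simp add: q_def c_def s_def)
  moreover have "k * s\<^sup>2 - c * s = (q + 1) * s\<^sup>2 / n - c * (s - s\<^sup>2 / n)"
    by (simp add: k_def add_divide_distrib algebra_simps)
  ultimately have "k * s\<^sup>2 - c * s \<le> q\<^sup>2 + 1"
    using adj_sum_on_independent_le[OF assms(2)] by (simp add: q_def)
  moreover have "k > 0" and c_sq: "c\<^sup>2 = 2 * q"
    by (simp_all add: k_def n_def c_def q_def add_pos_pos)
  ultimately have "s \<le> (c + sqrt (4 * k * (q\<^sup>2 + 1) + c\<^sup>2)) / (2 * k)"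
    by (intro le_quadratic_root)
  also have "4 * k * (q\<^sup>2 + 1) + c\<^sup>2 = 2 * q + 4 * (q\<^sup>2 + 1) * k"
    using c_sq by simp
  finally show ?thesis
    unfolding Let_def s_def k_def n_def c_def q_def .
qed

end
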